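(* Let $\mathfrak g$ be a finite-dimensional simple complex Lie algebra of classical type, $\mathfrak a\subseteq\mathfrak g$ a semisimple Levi subalgebra and $\lambda\in P^+$. If $(\mathfrak a,\lambda)$ is globally admissible, then $(\mathfrak a,\lambda)$ is locally admissible.
   Context: $\mathfrak g$ is a finite-dimensional simple complex Lie algebra of classical type $A_n,B_n,C_n$ or $D_n$ with Cartan subalgebra $\mathfrak h$, roots $R$, fundamental weights $\omega_1,\dots,\omega_n$, dominant integral weights $P^+$; roots are written in the standard coordinates $\varepsilon_i$ (type $B_n$: long $\varepsilon_i\pm\varepsilon_j$, short $\varepsilon_i$; type $C_n$: long $2\varepsilon_i$, short $\varepsilon_i\pm\varepsilon_j$; types $A_n$, $D_n$ as usual). A Levi subalgebra is, for a subset $R'\subseteq R$ closed under addition (within $R$) and under $\alpha\mapsto-\alpha$, $\mathfrak a=\sum_{\alpha\in R'}[\mathfrak g_\alpha,\mathfrak g_{-\alpha}]\oplus\bigoplus_{\alpha\in R'}\mathfrak g_\alpha$; it is semisimple, with Cartan subalgebra $\mathfrak h_{\mathfrak a}\subseteq\mathfrak h$ and positive roots $R'\cap R^+$. For a simple Levi subalgebra $\mathfrak b$ with fundamental weights $\tau_1,\dots,\tau_s$ let $\pi_{\mathfrak b}:\mathfrak h^*\to\mathfrak h_{\mathfrak b}^*$ be restriction. $(\mathfrak b,\omega_k)$ is globally admissible if $\pi_{\mathfrak b}(\omega_k)$ is $0$ or one of $\tau_1,\dots,\tau_s$. $(\mathfrak b,\omega_k)$ is locally non-admissible if either (1) $\mathfrak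 b$ is of type $B_s$, $s>1$, $\varepsilon_i$ is the unique short simple root of $\mathfrak b$, and $i\le k\le n-1$; or (2) $\mathfrak g$ is of type $C_n$, $\mathfrak b$ is of type $A_s$ and $\pi_{\mathfrak b}(\omega_k)\notin\{0,\tau_1,\dots,\tau_s\}$; otherwise locally admissible. For semisimple $\mathfrak a$ and $\lambda=\omega_{i_1}+\dots+\omega_{i_r}$ (with repetition), $(\mathfrak a,\lambda)$ is locally (resp. globally) admissible if $(\mathfrak a_l,\omega_{i_j})$ is locally (resp. globally) admissible for every $j$ and every simple ideal $\mathfrak a_l$ of $\mathfrak a$. *)

theory Defs
  imports Complex_Main
begin

text \<open>Classical root systems in standard coordinates. Vectors of h* are functions
  nat => rat supported on the coordinate indices 1..dimc t n (epsilon_1, ..., epsilon_dim).\<close>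

datatype ctype = TA | TB | TC | TD

definition valid_type :: "ctype \<Rightarrow> nat \<Rightarrow> bool" where
  "valid_type t n = (case t of TA \<Rightarrow> 1 \<le> n | TB \<Rightarrow> 2 \<le> n | TC \<Rightarrow> 3 \<le> n | TD \<Rightarrow> 4 \<le> n)"

definition dimc :: "ctype \<Rightarrow> nat \<Rightarrow> nat" where
  "dimc t n = (if t = TA then Suc n else n)"

definition sv :: "rat \<Rightarrow> nat \<Rightarrow> nat \<Rightarrow> rat" where
  "sv c i = (\<lambda>j. if j = i then c else 0)"

definition eps :: "nat \<Rightarrow> nat \<Rightarrow> rat" where
  "eps i = sv 1 i"

definition r2 :: "rat \<Rightarrow> nat \<Rightarrow> rat \<Rightarrow> nat \<Rightarrow> nat \<Rightarrow> rat" where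
  "r2 a i b j = (\<lambda>x. sv a i x + sv b j x)"

definition vadd :: "(nat \<Rightarrow> rat) \<Rightarrow> (nat \<Rightarrow> rat) \<Rightarrow> nat \<Rightarrow> rat" where
  "vadd x y = (\<lambda>j. x j + y j)"

definition vneg :: "(nat \<Rightarrow> rat) \<Rightarrow> nat \<Rightarrow> rat" where
  "vneg x = (\<lambda>j. - x j)"

definition D_part :: "nat \<Rightarrow> (nat \<Rightarrow> rat) set" where
  "D_part n = {r2 a i b j | a b i j. a \<in> {1, -1} \<and> b \<in> {1, -1} \<and> 1 \<le> i \<and> i < j \<and> j \<le> n}"

definition roots :: "ctype \<Rightarrow> nat \<Rightarrow> (nat \<Rightarrow> rat) set" where
  "roots t n = (case t of
     TA \<Rightarrow> {r2 1 i (-1) j | i j. i \<in> {1..Suc n} \<and> j \<in> {1..Suc n} \<and> i \<noteq> j}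
   | TB \<Rightarrow> D_part n \<union> {sv a i | a i. a \<in> {1, -1} \<and> i \<in> {1..n}}
   | TC \<Rightarrow> D_part n \<union> {sv (2 * a) i | a i. a \<in> {1, -1} \<and> i \<in> {1..n}}
   | TD \<Rightarrow> D_part n)"

definition pos_roots :: "ctype \<Rightarrow> nat \<Rightarrow> (nat \<Rightarrow> rat) set" where
  "pos_roots t n = (case t of
     TA \<Rightarrow> {r2 1 i (-1) j | i j. 1 \<le> i \<and> i < j \<and> j \<le> Suc n}
   | TB \<Rightarrow> {r2 1 i b j | b i j. b \<in> {1, -1} \<and> 1 \<le> i \<and> i < j \<and> j \<le> n}
           \<union> {sv 1 i | i. i \<in> {1..n}}
   | TC \<Rightarrow> {r2 1 i b j | b i j. b \<in> {1, -1} \<and> 1 \<le> i \<and> i < j \<and> j \<le> n}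
           \<union> {sv 2 i | i. i \<in> {1..n}}
   | TD \<Rightarrow> {r2 1 i b j | b i j. b \<in> {1, -1} \<and> 1 \<le> i \<and> i < j \<and> j \<le> n})"

text \<open>Simple roots of g in Bourbaki numbering, k = 1..n.\<close>
definition alpha :: "ctype \<Rightarrow> nat \<Rightarrow> nat \<Rightarrow> nat \<Rightarrow> rat" where
  "alpha t n k = (if k < n then r2 1 k (-1) (Suc k) else
     (case t of TA \<Rightarrow> r2 1 n (-1) (Suc n)
              | TB \<Rightarrow> sv 1 n
              | TC \<Rightarrow> sv 2 n
              | TD \<Rightarrow> r2 1 (n - 1) 1 n))"

definition ip :: "ctype \<Rightarrow> nat \<Rightarrow> (nat \<Rightarrow> rat) \<Rightarrow> (nat \<Rightarrow> rat) \<Rightarrow> rat" where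
  "ip t n x y = (\<Sum>j\<in>{1..dimc t n}. x j * y j)"

definition pair :: "ctype \<Rightarrow> nat \<Rightarrow> (nat \<Rightarrow> rat) \<Rightarrow> (nat \<Rightarrow> rat) \<Rightarrow> rat" where
  "pair t n l b = 2 * ip t n l b / ip t n b b"

definition ind :: "nat \<Rightarrow> rat \<Rightarrow> nat \<Rightarrow> rat" where
  "ind k c = (\<lambda>j. if 1 \<le> j \<and> j \<le> k then c else 0)"

text \<open>Fundamental weights omega_k in standard coordinates (Bourbaki, Planches I-IV).\<close>
definition fund_weight :: "ctype \<Rightarrow> nat \<Rightarrow> nat \<Rightarrow> nat \<Rightarrow> rat" where
  "fund_weight t n k = (case t of
     TA \<Rightarrow> (\<lambda>j. ind k 1 j - ind (Suc n) (of_nat k / of_nat (Suc n)) j)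
   | TB \<Rightarrow> (if k < n then ind k 1 else ind n (1/2))
   | TC \<Rightarrow> ind k 1
   | TD \<Rightarrow> (if k + 2 \<le> n then ind k 1
            else if k + 1 = n then (\<lambda>j. if 1 \<le> j \<and> j \<le> n - 1 then 1/2 else if j = n then -1/2 else 0)
            else ind n (1/2)))"

definition weight_space :: "ctype \<Rightarrow> nat \<Rightarrow> (nat \<Rightarrow> rat) set" where
  "weight_space t n = {x. (\<forall>j. j \<notin> {1..dimc t n} \<longrightarrow> x j = 0) \<and>
                          (t = TA \<longrightarrow> (\<Sum>j\<in>{1..Suc n}. x j) = 0)}"

definition dominant_weights :: "ctype \<Rightarrow> nat \<Rightarrow> (nat \<Rightarrow> rat) set" where
  "dominant_weights t n = {x \<in> weight_space t n. \<forall>k\<in>{1..n}. pair t n x (alpha t n k) \<in> \<nat>}"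

text \<open>Levi subalgebras, given by their root sets R' (closed and symmetric).\<close>
definition is_levi_rootset :: "ctype \<Rightarrow> nat \<Rightarrow> (nat \<Rightarrow> rat) set \<Rightarrow> bool" where
  "is_levi_rootset t n R' = (R' \<subseteq> roots t n \<and>
     (\<forall>a\<in>R'. \<forall>b\<in>R'. vadd a b \<in> roots t n \<longrightarrow> vadd a b \<in> R') \<and>
     (\<forall>a\<in>R'. vneg a \<in> R'))"

text \<open>Simple ideals of the Levi subalgebra = irreducible components of R'
  (classes of the transitive closure of non-orthogonality); each ideal is
  represented by its root set.\<close>
definition simple_ideals :: "ctype \<Rightarrow> nat \<Rightarrow> (nat \<Rightarrow> rat) set \<Rightarrow> (nat \<Rightarrow> rat) set set" where
  "simple_ideals t n R' =
     {{b. (a, b) \<in> {(x, y). x \<in> R' \<and> y \<in> R' \<and> ip t n x y \<noteq> 0}\<^sup>+} | a. a \<in> R'}"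

definition simple_roots :: "ctype \<Rightarrow> nat \<Rightarrow> (nat \<Rightarrow> rat) set \<Rightarrow> (nat \<Rightarrow> rat) set" where
  "simple_roots t n S = {a \<in> S \<inter> pos_roots t n.
      \<not> (\<exists>b\<in>S \<inter> pos_roots t n. \<exists>c\<in>S \<inter> pos_roots t n. a = vadd b c)}"

definition is_short :: "ctype \<Rightarrow> nat \<Rightarrow> (nat \<Rightarrow> rat) set \<Rightarrow> (nat \<Rightarrow> rat) \<Rightarrow> bool" where
  "is_short t n S b = (\<exists>c\<in>S. ip t n b b < ip t n c c)"

definition path_diagram :: "ctype \<Rightarrow> nat \<Rightarrow> (nat \<Rightarrow> rat) set \<Rightarrow> bool" where
  "path_diagram t n S = (\<forall>b\<in>simple_roots t n S.
      card {c \<in> simple_roots t n S. c \<noteq> b \<and> ip t n b c \<noteq> 0} \<le> 2)"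

text \<open>S (irreducible) is of type A_s: simply laced with unbranched diagram.\<close>
definition type_A :: "ctype \<Rightarrow> nat \<Rightarrow> (nat \<Rightarrow> rat) set \<Rightarrow> bool" where
  "type_A t n S = (path_diagram t n S \<and> (\<forall>b\<in>S. \<forall>c\<in>S. ip t n b b = ip t n c c))"

text \<open>S (irreducible) is of type B_s with s > 1: rank at least 2, unbranched diagram,
  two root lengths with ratio 2, exactly one short simple root.\<close>
definition type_B_gt1 :: "ctype \<Rightarrow> nat \<Rightarrow> (nat \<Rightarrow> rat) set \<Rightarrow> bool" where
  "type_B_gt1 t n S = (2 \<le> card (simple_roots t n S) \<and> path_diagram t n S \<and>
      card {b \<in> simple_roots t n S. is_short t n S b} = 1 \<and>
      (\<forall>b\<in>S. \<forall>c\<in>S. is_short t n S b \<and> \<not> is_short t n S c \<longrightarrow> ip t n c c = 2 * ip t n b b))"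

text \<open>pi_b(omega_k) is 0 or one of the fundamental weights tau_j of b; since the
  simple coroots of b form a basis of h_b and tau_j is the dual basis,
  pi_b(omega_k) = sum_j <omega_k, beta_j^vee> tau_j.\<close>
definition glob_adm :: "ctype \<Rightarrow> nat \<Rightarrow> (nat \<Rightarrow> rat) set \<Rightarrow> nat \<Rightarrow> bool" where
  "glob_adm t n S k =
     ((\<forall>b\<in>simple_roots t n S. pair t n (fund_weight t n k) b = 0) \<or>
      (\<exists>b0\<in>simple_roots t n S. \<forall>b\<in>simple_roots t n S.
          pair t n (fund_weight t n k) b = (if b = b0 then 1 else 0)))"

definition loc_nonadm :: "ctype \<Rightarrow> nat \<Rightarrow> (nat \<Rightarrow> rat) set \<Rightarrow> nat \<Rightarrow> bool" where
  "loc_nonadm t n S k =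
     ((type_B_gt1 t n S \<and>
        (\<exists>i. {b \<in> simple_roots t n S. is_short t n S b} = {eps i} \<and> i \<le> k \<and> k \<le> n - 1))
      \<or> (t = TC \<and> type_A t n S \<and> \<not> glob_adm t n S k))"

definition loc_adm :: "ctype \<Rightarrow> nat \<Rightarrow> (nat \<Rightarrow> rat) set \<Rightarrow> nat \<Rightarrow> bool" where
  "loc_adm t n S k = (\<not> loc_nonadm t n S k)"

text \<open>The indices i_j occurring in lambda = omega_(i_1) + ... + omega_(i_r).\<close>
definition weight_support :: "ctype \<Rightarrow> nat \<Rightarrow> (nat \<Rightarrow> rat) \<Rightarrow> nat set" where
  "weight_support t n l = {k \<in> {1..n}. pair t n l (alpha t n k) \<noteq> 0}"

definition glob_adm_pair :: "ctype \<Rightarrow> nat \<Rightarrow> (nat \<Rightarrow> rat) set \<Rightarrow> (nat \<Rightarrow> rat) \<Rightarrow> bool" where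
  "glob_adm_pair t n R' l = (\<forall>S\<in>simple_ideals t n R'. \<forall>k\<in>weight_support t n l. glob_adm t n S k)"

definition loc_adm_pair :: "ctype \<Rightarrow> nat \<Rightarrow> (nat \<Rightarrow> rat) set \<Rightarrow> (nat \<Rightarrow> rat) \<Rightarrow> bool" where
  "loc_adm_pair t n R' l = (\<forall>S\<in>simple_ideals t n R'. \<forall>k\<in>weight_support t n l. loc_adm t n S k)"

end

theory Submission
  imports Defs
begin

text \<open>Clause (2) of local non-admissibility is excluded by global admissibility verbatim.
  For clause (1) the short simple root must be some \<open>\<epsilon>\<^sub>i\<close>, and \<open>\<epsilon>\<^sub>i\<close> is a root only in
  type \<open>B\<^sub>n\<close>. There \<open>\<omega>\<^sub>k = \<epsilon>\<^sub>1 + \<dots> + \<epsilon>\<^sub>k\<close> for \<open>k < n\<close>, so \<open>i \<le> k\<close> gives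
  \<open>\<langle>\<omega>\<^sub>k, \<epsilon>\<^sub>i\<^sup>\<or>\<rangle> = 2\<close>, whereas global admissibility only allows the values 0 and 1 on
  simple roots of the ideal.\<close>

lemma eps_in_roots_imp_TB:
  assumes "eps i \<in> roots t n"
  shows "t = TB \<and> 1 \<le> i \<and> i \<le> n"
proof -
  have not_r2: "eps i \<noteq> r2 a p b q" if "a \<in> {1, -1}" "b \<in> {1, -1}" "p \<noteq> q" for a b p q
  proof
    assume eq: "eps i = r2 a p b q"
    from fun_cong[OF eq, of p] fun_cong[OF eq, of q] that show False
      by (auto simp: eps_def sv_def r2_def split: if_splits)
  qed
  then have not_D: "eps i \<notin> D_part n"
    unfolding D_part_def by (smt (verit) mem_Collect_eq nat_less_le)
  have not_long_sv: "eps i \<noteq> sv (2 * a) q" if "a \<in> {1, -1}" for a q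
  proof
    assume eq: "eps i = sv (2 * a) q"
    from fun_cong[OF eq, of q] fun_cong[OF eq, of i] that show False
      by (auto simp: eps_def sv_def split: if_splits)
  qed
  have sv_index: "i = q" if "eps i = sv a q" for a q
    using fun_cong[OF that, of i] by (auto simp: eps_def sv_def split: if_splits)
  show ?thesis
  proof (cases t)
    case TA
    with assms not_r2 show ?thesis by (auto simp: roots_def)
  next
    case TB
    with assms not_D sv_index show ?thesis by (auto simp: roots_def)
  next
    case TC
    with assms not_D not_long_sv show ?thesis by (auto simp: roots_def)
  next
    case TD
    with assms not_D show ?thesis by (auto simp: roots_def)
  qed
qed

lemma simple_ideal_subset_roots:
  assumes "is_levi_rootset t n R'" and "S \<in> simple_ideals t n R'"
  shows "S \<subseteq> roots t n"
proof
  fix b assume "b \<in> S"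
  then obtain a where "(a, b) \<in> {(x, y). x \<in> R' \<and> y \<in> R' \<and> ip t n x y \<noteq> 0}\<^sup>+"
    using assms(2) by (auto simp: simple_ideals_def)
  then have "b \<in> R'" by (induct rule: trancl_induct) auto
  with assms(1) show "b \<in> roots t n" by (auto simp: is_levi_rootset_def)
qed

lemma glob_adm_imp_pair_zero_or_one:
  assumes "glob_adm t n S k" and "b \<in> simple_roots t n S"
  shows "pair t n (fund_weight t n k) b \<in> {0, 1}"
  using assms unfolding glob_adm_def by (metis insertCI)

lemma sum_times_eps: "1 \<le> i \<Longrightarrow> i \<le> m \<Longrightarrow> (\<Sum>j\<in>{1..m}. f j * eps i j) = (f i :: rat)"
  by (simp add: eps_def sv_def if_distrib sum.If_cases)

lemma pair_fund_weight_eps_TB: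
  assumes "1 \<le> i" and "i \<le> k" and "k < n"
  shows "pair TB n (fund_weight TB n k) (eps i) = 2"
proof -
  have "fund_weight TB n k = ind k 1"
    using assms by (simp add: fund_weight_def)
  moreover have "ip TB n (ind k 1) (eps i) = 1"
    unfolding ip_def dimc_def using assms by (subst sum_times_eps) (auto simp: ind_def)
  moreover have "ip TB n (eps i) (eps i) = 1"
    unfolding ip_def dimc_def using assms by (subst sum_times_eps) (auto simp: eps_def sv_def)
  ultimately show ?thesis by (simp add: pair_def)
qed

lemma glob_adm_imp_loc_adm:
  assumes "is_levi_rootset t n R'" and "S \<in> simple_ideals t n R'"
    and "1 \<le> k" and "glob_adm t n S k"
  shows "loc_adm t n S k"
  unfolding loc_adm_def
proof
  assume "loc_nonadm t n S k"
  with assms(4) obtain i where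
    short: "{b \<in> simple_roots t n S. is_short t n S b} = {eps i}" and "i \<le> k" "k \<le> n - 1"
    unfolding loc_nonadm_def by blast
  then have simple: "eps i \<in> simple_roots t n S" by blast
  then have "eps i \<in> roots t n"
    using simple_ideal_subset_roots[OF assms(1,2)] by (auto simp: simple_roots_def)
  then have "t = TB" and "1 \<le> i" using eps_in_roots_imp_TB by auto
  with \<open>i \<le> k\<close> \<open>k \<le> n - 1\<close> assms(3) have "pair t n (fund_weight t n k) (eps i) = 2"
    using pair_fund_weight_eps_TB by simp
  with glob_adm_imp_pair_zero_or_one[OF assms(4) simple] show False by simp
qed

theorem mainTheorem3:
  fixes t :: ctype and n :: nat and R' :: "(nat \<Rightarrow> rat) set" and l :: "nat \<Rightarrow> rat"
  assumes "valid_type t n"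
    and "is_levi_rootset t n R'"
    and "l \<in> dominant_weights t n"
    and "glob_adm_pair t n R' l"
  shows "loc_adm_pair t n R' l"
  unfolding loc_adm_pair_def
proof (intro ballI)
  fix S k assume S: "S \<in> simple_ideals t n R'" and k: "k \<in> weight_support t n l"
  then have "glob_adm t n S k" using assms(4) by (auto simp: glob_adm_pair_def)
  moreover have "1 \<le> k" using k by (auto simp: weight_support_def)
  ultimately show "loc_adm t n S k" using glob_adm_imp_loc_adm[OF assms(2) S] by blast
qed

end
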